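(* Let $(\mathfrak{g},\langle\cdot,\cdot\rangle)$ be a $3$-dimensional Lie algebra with a Lorentzian scalar product, and let $\mathfrak{h}$ be a codimension one Lie subalgebra. Then: (i) if $\mathfrak{h}$ is abelian, $(\langle\cdot,\cdot\rangle,\mathfrak{h})$ is a Kundt pair if and only if $\mathfrak{h}$ is degenerate and $\mathrm{ad}_e(\mathfrak{g})\subset\mathfrak{h}$ for a generator $e$ of $\mathfrak{h}^\perp$; (ii) if $\mathfrak{h}$ is non-abelian, $(\langle\cdot,\cdot\rangle,\mathfrak{h})$ is a Kundt pair if and only if $\mathfrak{h}^\perp=[\mathfrak{h},\mathfrak{h}]$ and $\mathrm{ad}_e(\mathfrak{g})\subset\mathfrak{h}$ for a generator $e$ of $\mathfrak{h}^\perp$.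
   Context: The Levi-Civita product on $(\mathfrak{g},\langle\cdot,\cdot\rangle)$ is defined by $2\langle u\bullet v,w\rangle=\langle[u,v],w\rangle+\langle[w,u],v\rangle+\langle[w,v],u\rangle$. A Kundt pair on $\mathfrak{g}$ is a pair $(\langle\cdot,\cdot\rangle,\mathfrak{h})$ where $\langle\cdot,\cdot\rangle$ is a Lorentzian scalar product on $\mathfrak{g}$ and $\mathfrak{h}$ is a codimension one subalgebra, degenerate for $\langle\cdot,\cdot\rangle$, stable by $\bullet$ ($u\bullet v\in\mathfrak{h}$ for $u,v\in\mathfrak{h}$), and such that $e\bullet e=0$ for every $e\in\mathfrak{h}^\perp$. *)

theory Defs
  imports "HOL-Analysis.Analysis"
begin

type_synonym vec3 = "real ^ 3"

definition lie_bracket :: "(vec3 \<Rightarrow> vec3 \<Rightarrow> vec3) \<Rightarrow> bool" where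
  "lie_bracket br \<longleftrightarrow> bilinear br \<and> (\<forall>x y. br x y = - br y x) \<and>
     (\<forall>x y z. br x (br y z) + br y (br z x) + br z (br x y) = 0)"

definition lorentzian :: "(vec3 \<Rightarrow> vec3 \<Rightarrow> real) \<Rightarrow> bool" where
  "lorentzian B \<longleftrightarrow> bilinear B \<and> (\<forall>x y. B x y = B y x) \<and>
     (\<exists>e0 e1 e2. span {e0, e1, e2} = UNIV \<and>
        B e0 e0 = -1 \<and> B e1 e1 = 1 \<and> B e2 e2 = 1 \<and>
        B e0 e1 = 0 \<and> B e0 e2 = 0 \<and> B e1 e2 = 0)"

definition lie_subalgebra :: "(vec3 \<Rightarrow> vec3 \<Rightarrow> vec3) \<Rightarrow> vec3 set \<Rightarrow> bool" where
  "lie_subalgebra br h \<longleftrightarrow> subspace h \<and> (\<forall>x\<in>h. \<forall>y\<in>h. br x y \<in> h)"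

definition abelian_sub :: "(vec3 \<Rightarrow> vec3 \<Rightarrow> vec3) \<Rightarrow> vec3 set \<Rightarrow> bool" where
  "abelian_sub br h \<longleftrightarrow> (\<forall>x\<in>h. \<forall>y\<in>h. br x y = 0)"

definition derived_sub :: "(vec3 \<Rightarrow> vec3 \<Rightarrow> vec3) \<Rightarrow> vec3 set \<Rightarrow> vec3 set" where
  "derived_sub br h = span {br x y | x y. x \<in> h \<and> y \<in> h}"

definition orth :: "(vec3 \<Rightarrow> vec3 \<Rightarrow> real) \<Rightarrow> vec3 set \<Rightarrow> vec3 set" where
  "orth B h = {x. \<forall>y\<in>h. B x y = 0}"

definition degenerate_sub :: "(vec3 \<Rightarrow> vec3 \<Rightarrow> real) \<Rightarrow> vec3 set \<Rightarrow> bool" where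
  "degenerate_sub B h \<longleftrightarrow> (\<exists>x\<in>h. x \<noteq> 0 \<and> (\<forall>y\<in>h. B x y = 0))"

definition levi_civita ::
  "(vec3 \<Rightarrow> vec3 \<Rightarrow> vec3) \<Rightarrow> (vec3 \<Rightarrow> vec3 \<Rightarrow> real) \<Rightarrow> vec3 \<Rightarrow> vec3 \<Rightarrow> vec3" where
  "levi_civita br B u v = (THE w. \<forall>z. 2 * B w z = B (br u v) z + B (br z u) v + B (br z v) u)"

definition kundt_pair ::
  "(vec3 \<Rightarrow> vec3 \<Rightarrow> vec3) \<Rightarrow> (vec3 \<Rightarrow> vec3 \<Rightarrow> real) \<Rightarrow> vec3 set \<Rightarrow> bool" where
  "kundt_pair br B h \<longleftrightarrow> lorentzian B \<and> lie_subalgebra br h \<and> dim h = 2 \<and>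
     degenerate_sub B h \<and>
     (\<forall>u\<in>h. \<forall>v\<in>h. levi_civita br B u v \<in> h) \<and>
     (\<forall>e\<in>orth B h. levi_civita br B e e = 0)"

end

theory Submission
  imports Defs
begin

text \<open>Let \<open>n\<close> span \<open>h\<^sup>\<perp>\<close>, so that \<open>h = n\<^sup>\<perp>\<close>. Pairing the Koszul formula with \<open>n\<close> gives
  \<open>2\<langle>u \<bullet> v, n\<rangle> = \<langle>[n,u], v\<rangle> + \<langle>[n,v], u\<rangle>\<close> for \<open>u, v \<in> h\<close>, so \<open>h\<close> is stable by \<open>\<bullet>\<close> iff
  \<open>ad\<^sub>n\<close> is skew on \<open>h\<close>; and \<open>\<langle>n \<bullet> n, z\<rangle> = \<langle>[z,n], n\<rangle>\<close>, so \<open>n \<bullet> n = 0\<close> iff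
  \<open>ad\<^sub>n(g) \<subseteq> h\<close>. Degeneracy of \<open>h\<close> means \<open>n \<in> h\<close>, and then skewness is automatic
  for abelian \<open>h\<close>. Otherwise \<open>h = span {u, n}\<close> and \<open>[h,h] = \<real>[n,u]\<close> with \<open>[n,u] \<noteq> 0\<close>, and
  skewness says exactly that \<open>[n,u] \<perp> h\<close>, i.e. \<open>[h,h] = h\<^sup>\<perp>\<close>.\<close>

lemmas bilinear_simps = bilinear_ladd bilinear_radd bilinear_lmul bilinear_rmul
  bilinear_lsub bilinear_rsub bilinear_lneg bilinear_rneg bilinear_lzero bilinear_rzero

lemma nondegenerate_bilinear_representation:
  fixes B :: "'a::euclidean_space \<Rightarrow> 'a \<Rightarrow> real"
  assumes B: "bilinear B" and nondeg: "\<And>x. (\<And>y. B x y = 0) \<Longrightarrow> x = 0"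
  obtains J where "linear J" "bij J" "\<And>x y. B x y = inner (J x) y"
proof -
  \<comment> \<open>the adjoint of a functional, evaluated at 1, is its Riesz vector\<close>
  define J where "J x = adjoint (B x) 1" for x
  have rep: "B x y = inner (J x) y" for x y
    using adjoint_clauses(2)[of "B x" 1 y] B by (simp add: J_def bilinear_def)
  have "linear J"
  proof
    show "J (x + y) = J x + J y" for x y
      by (simp add: vector_eq_rdot[symmetric] inner_add_left rep[symmetric] bilinear_ladd[OF B])
    show "J (c *\<^sub>R x) = c *\<^sub>R J x" for c x
      by (simp add: vector_eq_rdot[symmetric] rep[symmetric] bilinear_lmul[OF B])
  qed
  moreover have "inj J"
    unfolding linear_injective_0[OF \<open>linear J\<close>] using nondeg by (simp add: rep)
  moreover have "surj J"
    using linear_injective_imp_surjective[OF \<open>linear J\<close> \<open>inj J\<close>] by simp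
  ultimately show ?thesis
    using that rep by (simp add: bij_def)
qed

lemma nondegenerate_bilinear_ex1:
  fixes B :: "'a::euclidean_space \<Rightarrow> 'a \<Rightarrow> real"
  assumes B: "bilinear B" and nondeg: "\<And>x. (\<And>y. B x y = 0) \<Longrightarrow> x = 0" and "linear L"
  shows "\<exists>!w. \<forall>z. B w z = L z"
proof -
  obtain J where "bij J" and rep: "\<And>x y. B x y = inner (J x) y"
    using nondegenerate_bilinear_representation[OF B nondeg] by blast
  have L: "L z = inner (adjoint L 1) z" for z
    using adjoint_clauses(2)[OF \<open>linear L\<close>, of 1 z] by simp
  define w where "w = inv J (adjoint L 1)"
  then have "J w = adjoint L 1"
    using \<open>bij J\<close> by (simp add: bij_is_surj surj_f_inv_f)
  then have w: "\<forall>z. B w z = L z"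
    by (simp add: rep L)
  moreover have "w' = w" if "\<forall>z. B w' z = L z" for w'
    using nondeg[of "w' - w"] that w by (simp add: bilinear_lsub[OF B])
  ultimately show ?thesis
    by blast
qed

lemma mem_span_pair:
  assumes "x \<in> span {u, v}"
  obtains a b where "x = a *\<^sub>R u + b *\<^sub>R v"
proof -
  obtain a where "x - a *\<^sub>R u \<in> span {v}"
    using assms by (auto simp: span_breakdown_eq)
  then obtain b where "x - a *\<^sub>R u = b *\<^sub>R v"
    by (auto simp: span_singleton)
  then show ?thesis
    using that by (simp add: algebra_simps)
qed

lemma subspace_dim_1_eq_span:
  fixes S :: "'a::euclidean_space set"
  assumes "subspace S" "dim S = 1"
  obtains n where "n \<noteq> 0" "S = span {n}"
proof -
  obtain A where "A \<subseteq> S" "independent A" "S \<subseteq> span A" "card A = 1"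
    using basis_exists assms(2) by metis
  then obtain n where A: "A = {n}"
    by (auto simp: card_1_singleton_iff)
  then have "span {n} \<subseteq> S"
    using \<open>A \<subseteq> S\<close> assms(1) by (simp add: span_minimal)
  moreover have "n \<noteq> 0"
    using \<open>independent A\<close> A dependent_zero by blast
  ultimately show ?thesis
    using that \<open>S \<subseteq> span A\<close> A by blast
qed

lemma subspace_dim_2_eq_span_insert:
  fixes S :: "'a::euclidean_space set"
  assumes "subspace S" "dim S = 2" "n \<in> S" "n \<noteq> 0"
  obtains u where "S = span {u, n}"
proof -
  have "\<not> S \<subseteq> span {n}"
    using dim_subset[of S "span {n}"] assms(2,4) by (auto simp: dim_span_eq_card_independent)
  then obtain u where "u \<in> S" "u \<notin> span {n}"
    by blast
  then have "independent {u, n}" "u \<noteq> n"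
    using assms(4) span_base[of n "{n}"] by (auto simp: independent_insert)
  then have "dim (span {u, n}) = 2"
    by (simp add: dim_eq_card_independent)
  moreover have "span {u, n} \<subseteq> S"
    using \<open>u \<in> S\<close> assms(1,3) by (simp add: span_minimal)
  ultimately have "span {u, n} = S"
    using subspace_dim_equal[OF subspace_span assms(1)] assms(2) by (metis dim_span order.refl)
  then show ?thesis
    using that by metis
qed

lemma span_singleton_eq:
  assumes "x \<in> span {y}" "x \<noteq> 0"
  shows "span {x} = span {y}"
proof -
  obtain k where "x = k *\<^sub>R y" "k \<noteq> 0"
    using assms by (auto simp: span_singleton)
  then have "y = inverse k *\<^sub>R x"
    by simp
  then have "y \<in> span {x}"
    by (metis span_base span_scale insertI1)
  then show ?thesis
    using assms(1) by (simp add: span_eq)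
qed

lemma lie_bracket_bilinear: "lie_bracket br \<Longrightarrow> bilinear br"
  and lie_bracket_antisym: "lie_bracket br \<Longrightarrow> br x y = - br y x"
  unfolding lie_bracket_def by blast+

lemma lie_bracket_self:
  assumes "lie_bracket br"
  shows "br x x = 0"
  using lie_bracket_antisym[OF assms, of x x] by (simp add: eq_neg_iff_add_eq_0 scaleR_2[symmetric])

lemma lorentzian_bilinear: "lorentzian B \<Longrightarrow> bilinear B"
  and lorentzian_sym: "lorentzian B \<Longrightarrow> B x y = B y x"
  unfolding lorentzian_def by blast+

lemma lorentzian_nondegenerate:
  assumes "lorentzian B" "\<And>y. B x y = 0"
  shows "x = 0"
proof -
  from assms(1) obtain e0 e1 e2 where sp: "span {e0, e1, e2} = UNIV" and
    v: "B e0 e0 = -1" "B e1 e1 = 1" "B e2 e2 = 1" "B e0 e1 = 0" "B e0 e2 = 0" "B e1 e2 = 0"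
    unfolding lorentzian_def by blast
  have B: "bilinear B"
    using assms(1) by (rule lorentzian_bilinear)
  have v': "B e1 e0 = 0" "B e2 e0 = 0" "B e2 e1 = 0"
    using v lorentzian_sym[OF assms(1)] by metis+
  obtain a where "x - a *\<^sub>R e0 \<in> span {e1, e2}"
    using sp span_breakdown_eq[of x e0 "{e1, e2}"] by blast
  then obtain b c where "x - a *\<^sub>R e0 = b *\<^sub>R e1 + c *\<^sub>R e2"
    by (rule mem_span_pair)
  then have x: "x = a *\<^sub>R e0 + b *\<^sub>R e1 + c *\<^sub>R e2"
    by (simp add: algebra_simps)
  have "B x e0 = - a" "B x e1 = b" "B x e2 = c"
    unfolding x using v v' by (simp_all add: bilinear_simps[OF B])
  then show ?thesis
    using assms(2)[of e0] assms(2)[of e1] assms(2)[of e2] x by simp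
qed

lemma levi_civita_eq:
  assumes "lie_bracket br" "lorentzian B"
  shows "2 * B (levi_civita br B u v) z = B (br u v) z + B (br z u) v + B (br z v) u"
proof -
  have B: "bilinear B"
    using assms(2) by (rule lorentzian_bilinear)
  have br: "bilinear br"
    using assms(1) by (rule lie_bracket_bilinear)
  define R where "R z = B (br u v) z + B (br z u) v + B (br z v) u" for z
  have "linear (\<lambda>z. R z / 2)"
    by (rule linearI) (simp_all add: R_def bilinear_simps[OF B] bilinear_simps[OF br] field_simps)
  then have "\<exists>!w. \<forall>z. B w z = R z / 2"
    using nondegenerate_bilinear_ex1 B lorentzian_nondegenerate[OF assms(2)] by blast
  moreover have halve: "2 * B w z = R z \<longleftrightarrow> B w z = R z / 2" for w z
    by linarith
  ultimately have "\<exists>!w. \<forall>z. 2 * B w z = R z"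
    by (simp only: halve)
  then show ?thesis
    unfolding levi_civita_def R_def[symmetric] by (rule theI'[THEN spec])
qed

lemma subspace_orth: "bilinear B \<Longrightarrow> subspace (orth B W)"
  by (simp add: subspace_def orth_def bilinear_simps)

lemma orth_span:
  assumes "bilinear B"
  shows "orth B (span S) = orth B S"
proof -
  have "span S \<subseteq> {y. B x y = 0}" if "x \<in> orth B S" for x
    using that assms by (intro span_minimal) (auto simp: orth_def subspace_def bilinear_simps)
  then show ?thesis
    using span_superset by (fastforce simp: orth_def)
qed

lemma dim_orth:
  assumes "lorentzian B" "subspace W"
  shows "dim (orth B W) + dim W = 3"
proof -
  obtain J where "linear J" "bij J" and rep: "\<And>x y. B x y = inner (J x) y"
    using nondegenerate_bilinear_representation lorentzian_bilinear[OF assms(1)]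
      lorentzian_nondegenerate[OF assms(1)] by blast
  have "orth B W = {x \<in> UNIV. \<forall>w \<in> J ` W. orthogonal w x}"
    using lorentzian_sym[OF assms(1)] by (auto simp: orth_def orthogonal_def rep)
  moreover have "dim (J ` W) = dim W"
    using \<open>linear J\<close> \<open>bij J\<close> by (intro dim_image_eq) (auto simp: bij_def intro: inj_on_subset)
  moreover have "subspace (J ` W)"
    using \<open>linear J\<close> assms(2) by (rule linear_subspace_image)
  ultimately show ?thesis
    using dim_subspace_orthogonal_to_vectors[of "J ` W" UNIV] by (simp add: subspace_UNIV)
qed

lemma orth_dim_2_eq_span:
  assumes "lorentzian B" "subspace h" "dim h = 2"
  obtains n where "n \<noteq> 0" "orth B h = span {n}"
proof -
  have "dim (orth B h) = 1"
    using dim_orth[OF assms(1,2)] assms(3) by simp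
  then show ?thesis
    using subspace_dim_1_eq_span subspace_orth[OF lorentzian_bilinear[OF assms(1)]] that by blast
qed

lemma derived_sub_subset: "lie_subalgebra br h \<Longrightarrow> derived_sub br h \<subseteq> h"
  unfolding lie_subalgebra_def derived_sub_def by (intro span_minimal) auto

lemma derived_sub_span_pair:
  assumes "lie_bracket br"
  shows "derived_sub br (span {u, n}) = span {br n u}"
proof -
  have br: "bilinear br"
    using assms by (rule lie_bracket_bilinear)
  have "br x y \<in> span {br n u}" if x: "x \<in> span {u, n}" and y: "y \<in> span {u, n}" for x y
  proof -
    obtain a b where "x = a *\<^sub>R u + b *\<^sub>R n"
      using mem_span_pair[OF x] .
    moreover obtain c d where "y = c *\<^sub>R u + d *\<^sub>R n"
      using mem_span_pair[OF y] .
    ultimately have "br x y = (b * c - a * d) *\<^sub>R br n u"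
      using lie_bracket_antisym[OF assms, of u n]
      by (simp add: bilinear_simps[OF br] lie_bracket_self[OF assms] algebra_simps)
    then show ?thesis
      by (simp add: span_base span_scale)
  qed
  then have "derived_sub br (span {u, n}) \<subseteq> span {br n u}"
    unfolding derived_sub_def by (intro span_minimal) auto
  moreover have "br n u \<in> derived_sub br (span {u, n})"
    unfolding derived_sub_def by (intro span_base) (auto intro: span_base)
  ultimately show ?thesis
    unfolding derived_sub_def by (simp add: span_minimal subset_antisym)
qed

lemma levi_civita_self:
  assumes "lie_bracket br" "lorentzian B"
  shows "B (levi_civita br B e e) z = B (br z e) e"
  using levi_civita_eq[OF assms, of e e z] lie_bracket_self[OF assms(1)]
    bilinear_lzero[OF lorentzian_bilinear[OF assms(2)]] by simp

locale lorentzian_codim1_subalgebra =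
  fixes br :: "vec3 \<Rightarrow> vec3 \<Rightarrow> vec3" and B :: "vec3 \<Rightarrow> vec3 \<Rightarrow> real"
    and h :: "vec3 set" and n :: vec3
  assumes bracket: "lie_bracket br" and scalar: "lorentzian B"
    and subalgebra: "lie_subalgebra br h" and dim_h: "dim h = 2"
    and n_nonzero: "n \<noteq> 0" and orth_h: "orth B h = span {n}"
begin

lemma B_bilinear: "bilinear B"
  using scalar by (rule lorentzian_bilinear)

lemma br_bilinear: "bilinear br"
  using bracket by (rule lie_bracket_bilinear)

lemma subspace_h: "subspace h"
  and bracket_closed: "x \<in> h \<Longrightarrow> y \<in> h \<Longrightarrow> br x y \<in> h"
  using subalgebra by (simp_all add: lie_subalgebra_def)

lemma mem_orth_iff: "x \<in> orth B h \<longleftrightarrow> (\<exists>k. x = k *\<^sub>R n)"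
  by (auto simp: orth_h span_singleton)

lemma n_orth: "n \<in> orth B h"
  by (simp add: orth_h span_base)

lemma mem_h_iff: "x \<in> h \<longleftrightarrow> B x n = 0"
proof -
  have hyperplane: "{x. B x n = 0} = orth B (span {n})"
    unfolding orth_span[OF B_bilinear] by (simp add: orth_def)
  have "h \<subseteq> {x. B x n = 0}"
    using n_orth lorentzian_sym[OF scalar] by (auto simp: orth_def)
  moreover have "dim {x. B x n = 0} = 2"
    using dim_orth[OF scalar subspace_span, of "{n}"] n_nonzero
    by (simp add: hyperplane dim_span_eq_card_independent)
  ultimately have "h = {x. B x n = 0}"
    using subspace_dim_equal[OF subspace_h] subspace_orth[OF B_bilinear] dim_h hyperplane by simp
  then show ?thesis
    by blast
qed

lemma degenerate_sub_iff: "degenerate_sub B h \<longleftrightarrow> n \<in> h"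
proof
  assume "degenerate_sub B h"
  then obtain x where "x \<in> h" "x \<noteq> 0" "x \<in> orth B h"
    by (auto simp: degenerate_sub_def orth_def)
  then obtain k where "x = k *\<^sub>R n" "k \<noteq> 0"
    using mem_orth_iff by auto
  then have "n = inverse k *\<^sub>R x"
    by simp
  then show "n \<in> h"
    using \<open>x \<in> h\<close> subspace_h by (simp add: subspace_scale)
next
  assume "n \<in> h"
  then show "degenerate_sub B h"
    using n_nonzero mem_h_iff lorentzian_sym[OF scalar] by (auto simp: degenerate_sub_def)
qed

lemma levi_civita_stable_iff:
  "(\<forall>u\<in>h. \<forall>v\<in>h. levi_civita br B u v \<in> h) \<longleftrightarrow>
   (\<forall>u\<in>h. \<forall>v\<in>h. B (br n u) v + B (br n v) u = 0)"
proof -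
  have "levi_civita br B u v \<in> h \<longleftrightarrow> B (br n u) v + B (br n v) u = 0" if "u \<in> h" "v \<in> h" for u v
    using levi_civita_eq[OF bracket scalar, of u v n] bracket_closed[OF that]
    by (auto simp: mem_h_iff)
  then show ?thesis
    by blast
qed

lemma levi_civita_null_iff: "(\<forall>e\<in>orth B h. levi_civita br B e e = 0) \<longleftrightarrow> (\<forall>x. br n x \<in> h)"
proof -
  have ad_n: "br n x \<in> h \<longleftrightarrow> B (br x n) n = 0" for x
    using lie_bracket_antisym[OF bracket, of n x] by (simp add: mem_h_iff bilinear_lneg[OF B_bilinear])
  show ?thesis
  proof
    assume "\<forall>e\<in>orth B h. levi_civita br B e e = 0"
    then have "levi_civita br B n n = 0"
      using n_orth by blast
    then show "\<forall>x. br n x \<in> h"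
      using levi_civita_self[OF bracket scalar, of n] ad_n by (simp add: bilinear_lzero[OF B_bilinear])
  next
    assume "\<forall>x. br n x \<in> h"
    then have "B (br z (k *\<^sub>R n)) (k *\<^sub>R n) = 0" for z k
      using ad_n by (simp add: bilinear_simps[OF B_bilinear] bilinear_rmul[OF br_bilinear])
    then have "B (levi_civita br B e e) z = 0" if "e \<in> orth B h" for e z
      using that levi_civita_self[OF bracket scalar] mem_orth_iff by auto
    then show "\<forall>e\<in>orth B h. levi_civita br B e e = 0"
      using lorentzian_nondegenerate[OF scalar] by blast
  qed
qed

lemma orth_generator_ad_iff:
  "(\<exists>e. e \<noteq> 0 \<and> orth B h = span {e} \<and> (\<forall>x. br e x \<in> h)) \<longleftrightarrow> (\<forall>x. br n x \<in> h)"
proof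
  assume "\<exists>e. e \<noteq> 0 \<and> orth B h = span {e} \<and> (\<forall>x. br e x \<in> h)"
  then obtain e where orth_e: "orth B h = span {e}" and ad_e: "\<forall>x. br e x \<in> h"
    by blast
  obtain c where "n = c *\<^sub>R e"
    using n_orth unfolding orth_e by (auto simp: span_singleton)
  then show "\<forall>x. br n x \<in> h"
    using ad_e subspace_h by (simp add: bilinear_lmul[OF br_bilinear] subspace_scale)
next
  assume "\<forall>x. br n x \<in> h"
  then show "\<exists>e. e \<noteq> 0 \<and> orth B h = span {e} \<and> (\<forall>x. br e x \<in> h)"
    using n_nonzero orth_h by blast
qed

lemma kundt_pair_iff:
  "kundt_pair br B h \<longleftrightarrow>
     n \<in> h \<and> (\<forall>u\<in>h. \<forall>v\<in>h. B (br n u) v + B (br n v) u = 0) \<and> (\<forall>x. br n x \<in> h)"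
  unfolding kundt_pair_def
  using scalar subalgebra dim_h degenerate_sub_iff levi_civita_stable_iff levi_civita_null_iff
  by blast

lemma kundt_pair_iff_abelian:
  assumes "abelian_sub br h"
  shows "kundt_pair br B h \<longleftrightarrow> n \<in> h \<and> (\<forall>x. br n x \<in> h)"
  using assms by (auto simp: kundt_pair_iff abelian_sub_def bilinear_lzero[OF B_bilinear])

lemma derived_sub_eq_orth:
  assumes "\<not> abelian_sub br h" "n \<in> h"
    and skew: "\<forall>u\<in>h. \<forall>v\<in>h. B (br n u) v + B (br n v) u = 0"
  shows "derived_sub br h = orth B h"
proof -
  obtain u where h_eq: "h = span {u, n}"
    using subspace_dim_2_eq_span_insert[OF subspace_h dim_h \<open>n \<in> h\<close> n_nonzero] .
  then have "u \<in> h"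
    by (simp add: span_base)
  have derived_eq: "derived_sub br h = span {br n u}"
    using derived_sub_span_pair[OF bracket] h_eq by simp
  have "br n u \<in> orth B h"
  proof -
    have "B (br n u) u = 0"
      using skew \<open>u \<in> h\<close> by fastforce
    moreover have "B (br n u) n = 0"
      using bracket_closed[OF \<open>n \<in> h\<close> \<open>u \<in> h\<close>] mem_h_iff by blast
    ultimately show ?thesis
      unfolding h_eq orth_span[OF B_bilinear] by (simp add: orth_def)
  qed
  moreover have "br n u \<noteq> 0"
  proof
    assume "br n u = 0"
    obtain x y where "x \<in> h" "y \<in> h" "br x y \<noteq> 0"
      using assms(1) by (auto simp: abelian_sub_def)
    then have "br x y \<in> derived_sub br h"
      unfolding derived_sub_def by (blast intro: span_base)
    with \<open>br x y \<noteq> 0\<close> \<open>br n u = 0\<close> show False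
      by (simp add: derived_eq)
  qed
  ultimately show ?thesis
    using span_singleton_eq[of "br n u" n] by (simp add: orth_h derived_eq)
qed

lemma kundt_pair_iff_nonabelian:
  assumes "\<not> abelian_sub br h"
  shows "kundt_pair br B h \<longleftrightarrow> orth B h = derived_sub br h \<and> (\<forall>x. br n x \<in> h)"
proof
  assume "kundt_pair br B h"
  then show "orth B h = derived_sub br h \<and> (\<forall>x. br n x \<in> h)"
    using derived_sub_eq_orth[OF assms] by (simp add: kundt_pair_iff)
next
  assume "orth B h = derived_sub br h \<and> (\<forall>x. br n x \<in> h)"
  then have orth_eq: "orth B h = derived_sub br h" and ad_n: "\<forall>x. br n x \<in> h"
    by simp_all
  have "n \<in> h"
    using n_orth derived_sub_subset[OF subalgebra] orth_eq by blast
  moreover have "B (br n u) v = 0" if "u \<in> h" "v \<in> h" for u v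
    using that \<open>n \<in> h\<close> orth_eq by (auto simp: orth_def derived_sub_def intro: span_base)
  ultimately show "kundt_pair br B h"
    using ad_n by (simp add: kundt_pair_iff)
qed

end

theorem proposition5p1:
  fixes br :: "vec3 \<Rightarrow> vec3 \<Rightarrow> vec3" and B :: "vec3 \<Rightarrow> vec3 \<Rightarrow> real" and h :: "vec3 set"
  assumes "lie_bracket br" and "lorentzian B"
    and "lie_subalgebra br h" and "dim h = 2"
  shows "(abelian_sub br h \<longrightarrow>
            (kundt_pair br B h \<longleftrightarrow>
              degenerate_sub B h \<and>
              (\<exists>e. e \<noteq> 0 \<and> orth B h = span {e} \<and> (\<forall>x. br e x \<in> h))))
       \<and> (\<not> abelian_sub br h \<longrightarrow>
            (kundt_pair br B h \<longleftrightarrow>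
              orth B h = derived_sub br h \<and>
              (\<exists>e. e \<noteq> 0 \<and> orth B h = span {e} \<and> (\<forall>x. br e x \<in> h))))"
proof -
  have "subspace h"
    using assms(3) by (simp add: lie_subalgebra_def)
  then obtain n where "n \<noteq> 0" "orth B h = span {n}"
    using orth_dim_2_eq_span assms(2,4) by blast
  then interpret lorentzian_codim1_subalgebra br B h n
    using assms by unfold_locales
  show ?thesis
    using kundt_pair_iff_abelian kundt_pair_iff_nonabelian degenerate_sub_iff orth_generator_ad_iff by blast
qed

end
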